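(* Let $k\geq 3$ and let $b_1,\dots,b_k$ be free generators of $\Lambda=\mathbb F_k$. Then there is $C>0$ such that for every large enough prime $p$ with $p\equiv 1\pmod 3$ there exist an onto homomorphism $\rho_p:\Lambda\rightarrow G_p$ and a set $T_p\subset G_p$ satisfying $\frac{1}{243}\leq\frac{|T_p|}{|G_p|}\leq\frac13$ and $|T_p\rho_p(b_j)\triangle T_p|\leq \frac{C}{\sqrt p}|G_p|$ for every $1\leq j\leq k$. Moreover, these can be chosen so that for every $h\in\Lambda\setminus\{e\}$ we have $\rho_p(h)\neq e$ for every large enough $p$.
   Context: $F_q$ is the field with $q$ elements. For a prime $p\equiv1\pmod 3$: $H_p=\mathrm{PSL}_2(F_p)$ acts on $\mathrm{P}^1(F_p)=F_p\cup\{\infty\}$ by linear fractional transformations, hence on $F_3^{p+1}\cong F_3^{\mathrm{P}^1(F_p)}$ by permuting coordinates ($g\cdot x=(x_{g^{-1}\cdot i})_i$); $A_p=\{(x_i)\in F_3^{p+1}\mid\sum_i x_i=0\}$ is an $H_p$-invariant subspace and $G_p=A_p\rtimes H_p$. $\triangle$ denotes symmetric difference. *)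

theory Defs
  imports "HOL-Algebra.Algebra" "HOL-Number_Theory.Number_Theory" Complex_Main
begin

text \<open>Projective line P^1(F_p) is modelled as the integers {0..p}, the point p standing
  for infinity; F_p is modelled by residues {0..p-1}.\<close>

definition fdiv :: "int \<Rightarrow> int \<Rightarrow> int \<Rightarrow> int" where
  "fdiv p u v = (THE w. 0 \<le> w \<and> w < p \<and> [w * v = u] (mod p))"

definition mobius :: "int \<Rightarrow> int \<Rightarrow> int \<Rightarrow> int \<Rightarrow> int \<Rightarrow> int \<Rightarrow> int" where
  "mobius p a b c d z =
     (if z \<notin> {0..p} then z
      else if z = p then (if [c = 0] (mod p) then p else fdiv p a c)
      else if [c * z + d = 0] (mod p) then p
      else fdiv p (a * z + b) (c * z + d))"

text \<open>H_p = PSL_2(F_p) realised (faithfully) as its group of permutations of P^1(F_p).\<close>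
definition Hp :: "int \<Rightarrow> (int \<Rightarrow> int) set" where
  "Hp p = {mobius p a b c d | a b c d. [a * d - b * c = 1] (mod p)}"

text \<open>A_p: vectors in F_3^{P^1(F_p)} (entries in {0,1,2}) with coordinate sum 0.\<close>
definition Ap :: "int \<Rightarrow> (int \<Rightarrow> int) set" where
  "Ap p = {x. (\<forall>i\<in>{0..p}. x i \<in> {0,1,2}) \<and> (\<forall>i. i \<notin> {0..p} \<longrightarrow> x i = 0)
              \<and> (\<Sum>i\<in>{0..p}. x i) mod 3 = 0}"

definition pact :: "(int \<Rightarrow> int) \<Rightarrow> (int \<Rightarrow> int) \<Rightarrow> (int \<Rightarrow> int)" where
  "pact g x = (\<lambda>i. x (Hilbert_Choice.inv g i))"

type_synonym gelem = "(int \<Rightarrow> int) \<times> (int \<Rightarrow> int)"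

text \<open>G_p = A_p \<rtimes> H_p with (x,g)(y,h) = (x + g.y, g h).\<close>
definition Gp :: "int \<Rightarrow> gelem monoid" where
  "Gp p = \<lparr> carrier = {(x, g). x \<in> Ap p \<and> g \<in> Hp p},
           monoid.mult = (\<lambda>(x, g) (y, h). ((\<lambda>i. (x i + pact g y i) mod 3), g \<circ> h)),
           monoid.one = ((\<lambda>_. 0), id) \<rparr>"

text \<open>The free group F_k on b_1..b_k: elements are reduced words, letters (j, True) = b_j
  and (j, False) = b_j^{-1}; the empty word is e.\<close>
definition reduced_word :: "(nat \<times> bool) list \<Rightarrow> bool" where
  "reduced_word w = (\<forall>n. Suc n < length w \<longrightarrow>
      \<not> (fst (w ! n) = fst (w ! Suc n) \<and> snd (w ! n) \<noteq> snd (w ! Suc n)))"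

definition free_elems :: "nat \<Rightarrow> (nat \<times> bool) list set" where
  "free_elems k = {w. w \<in> lists ({1..k} \<times> UNIV) \<and> reduced_word w}"

definition word_eval :: "('a, 'b) monoid_scheme \<Rightarrow> (nat \<Rightarrow> 'a) \<Rightarrow> (nat \<times> bool) list \<Rightarrow> 'a" where
  "word_eval G g w = foldr (\<lambda>(j, s) acc. (if s then g j else inv\<^bsub>G\<^esub> (g j)) \<otimes>\<^bsub>G\<^esub> acc) w \<one>\<^bsub>G\<^esub>"

end

theory Submission
  imports Defs
begin

text \<open>
  The generators go to M\<ouml>bius transformations with integer matrices, a translation and conjugates
  of the lower shear z \<mapsto> z / (2z + 1), and \<rho>_p(b_3) carries in addition the translation part
  e_\<infinity> - e_0 \<in> A_p. Over the reals these matrices play ping-pong, so a nontrivial reduced word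
  moves 0 to a nonzero rational b/d, and for p > |b| it moves 0 \<in> P^1(F_p) as well. Over F_p the
  images of b_1 and b_2 yield all upper and lower shears, hence all of H_p = PSL_2(F_p), and the
  H_p-translates of e_\<infinity> - e_0 span A_p; so \<rho>_p is onto. The set T_p = {(x, g) : x_0 = 0} has
  density exactly 1/3, and right multiplication by \<rho>_p(b_j) = (y, h), with y supported on
  {0, \<infinity>}, changes x_0 only if g^-1(0) \<in> {0, \<infinity>}. By transitivity of H_p this concerns a
  fraction 2/(p + 1) \<le> 2/sqrt p of G_p.
\<close>

section \<open>The projective line over F_p\<close>

text \<open>\<open>proj_pt p s t\<close> is the point [s : t] of P^1(F_p), and \<open>hom_coords p z\<close> a vector of
  homogeneous coordinates of z.\<close>
definition proj_pt :: "int \<Rightarrow> int \<Rightarrow> int \<Rightarrow> int" where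
  "proj_pt p s t = (if p dvd t then p else fdiv p s t)"

definition hom_coords :: "int \<Rightarrow> int \<Rightarrow> int \<times> int" where
  "hom_coords p z = (if z = p then (1, 0) else (z, 1))"

definition nonzero_vec :: "int \<Rightarrow> int \<Rightarrow> int \<Rightarrow> bool" where
  "nonzero_vec p s t \<longleftrightarrow> \<not> (p dvd s \<and> p dvd t)"

locale prime_modulus =
  fixes p :: int
  assumes prime: "Factorial_Ring.prime p"
begin

lemma p_gt_1: "p > 1"
  using prime prime_gt_1_int by blast

lemma not_dvd_1: "\<not> p dvd 1"
  using p_gt_1 by (simp add: zdvd_not_zless)

lemma not_dvd_mult: "\<not> p dvd a \<Longrightarrow> \<not> p dvd b \<Longrightarrow> \<not> p dvd a * b"
  using prime by (simp add: prime_dvd_mult_iff)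

lemma coprime_if_not_dvd: "\<not> p dvd v \<Longrightarrow> coprime v p"
  using prime by (metis coprime_commute prime_imp_coprime)

lemma exists_inverse:
  assumes "\<not> p dvd v"
  obtains i where "[v * i = 1] (mod p)"
  using cong_solve_coprime_int[OF coprime_if_not_dvd[OF assms]] by blast

lemma fdiv_eqI:
  assumes "\<not> p dvd v" "0 \<le> w" "w < p" "[w * v = u] (mod p)"
  shows "fdiv p u v = w"
  unfolding fdiv_def
proof (rule the_equality)
  show "0 \<le> w \<and> w < p \<and> [w * v = u] (mod p)" using assms by blast
  fix w' assume w': "0 \<le> w' \<and> w' < p \<and> [w' * v = u] (mod p)"
  have "[w' * v = w * v] (mod p)" using w' assms(4) by (meson cong_sym cong_trans)
  then have "[w' = w] (mod p)" using cong_mult_rcancel[OF coprime_if_not_dvd[OF assms(1)]] by blast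
  then show "w' = w" using w' assms by (simp add: cong_def)
qed

lemma fdiv_correct:
  assumes "\<not> p dvd v"
  shows "0 \<le> fdiv p u v \<and> fdiv p u v < p \<and> [fdiv p u v * v = u] (mod p)"
proof -
  obtain i where i: "[v * i = 1] (mod p)" using exists_inverse assms by blast
  have "[(u * i) mod p * v = u * (v * i)] (mod p)"
    unfolding cong_def by (metis mod_mult_left_eq mult.assoc mult.commute)
  also have "[u * (v * i) = u * 1] (mod p)" using i by (rule cong_scalar_left)
  finally have w: "[(u * i) mod p * v = u] (mod p)" by simp
  then have "fdiv p u v = (u * i) mod p"
    using p_gt_1 by (intro fdiv_eqI assms) auto
  with w show ?thesis using p_gt_1 by simp
qed

lemma fdiv_1: "0 \<le> t \<Longrightarrow> t < p \<Longrightarrow> fdiv p t 1 = t"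
  using not_dvd_1 by (intro fdiv_eqI) auto

lemma proj_pt_range: "proj_pt p s t \<in> {0..p}"
  using fdiv_correct p_gt_1 by (auto simp: proj_pt_def less_imp_le)

lemma proj_pt_eqI:
  assumes "\<not> p dvd m" "[s' = m * s] (mod p)" "[t' = m * t] (mod p)"
  shows "proj_pt p s' t' = proj_pt p s t"
proof (cases "p dvd t")
  case True
  then have "p dvd t'"
    using assms(3) by (metis cong_dvd_iff dvd_mult)
  then show ?thesis using True by (simp add: proj_pt_def)
next
  case False
  then have t': "\<not> p dvd t'"
    using assms(1,3) not_dvd_mult cong_dvd_iff by blast
  have w: "0 \<le> fdiv p s t \<and> fdiv p s t < p \<and> [fdiv p s t * t = s] (mod p)"
    using fdiv_correct[OF False] .
  have "[fdiv p s t * t' = fdiv p s t * (m * t)] (mod p)"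
    using assms(3) by (rule cong_scalar_left)
  also have "fdiv p s t * (m * t) = m * (fdiv p s t * t)" by simp
  also have "[m * (fdiv p s t * t) = m * s] (mod p)"
    using w by (intro cong_scalar_left) blast
  also have "[m * s = s'] (mod p)" using assms(2) by (rule cong_sym)
  finally show ?thesis
    using False t' w by (simp add: proj_pt_def fdiv_eqI)
qed

lemma proj_pt_hom_coords:
  assumes "z \<in> {0..p}" "hom_coords p z = (s, t)"
  shows "proj_pt p s t = z"
  using assms p_gt_1 not_dvd_1 fdiv_1 by (auto simp: hom_coords_def proj_pt_def split: if_splits)

lemma hom_coords_nonzero: "hom_coords p z = (s, t) \<Longrightarrow> nonzero_vec p s t"
  using not_dvd_1 by (auto simp: hom_coords_def nonzero_vec_def split: if_splits)

lemma hom_coords_proj_pt: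
  assumes "nonzero_vec p s t" "hom_coords p (proj_pt p s t) = (s', t')"
  obtains m where "\<not> p dvd m" "[s = m * s'] (mod p)" "[t = m * t'] (mod p)"
proof (cases "p dvd t")
  case True
  then have "s' = 1" "t' = 0" "\<not> p dvd s"
    using assms by (auto simp: proj_pt_def hom_coords_def nonzero_vec_def)
  then show ?thesis using True that[of s] by (simp add: cong_0_iff)
next
  case False
  with fdiv_correct[OF False, of s] assms(2) have "s' = fdiv p s t" "t' = 1" "[s' * t = s] (mod p)"
    by (auto simp: proj_pt_def hom_coords_def)
  then show ?thesis using False that[of t] by (simp add: cong_sym mult.commute)
qed

lemma mobius_hom_coords:
  assumes "z \<in> {0..p}" "hom_coords p z = (s, t)"
  shows "mobius p a b c d z = proj_pt p (a * s + b * t) (c * s + d * t)"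
  using assms by (auto simp: mobius_def hom_coords_def proj_pt_def cong_0_iff split: if_splits)

lemma cong_1_not_dvd: "[x = 1] (mod p) \<Longrightarrow> \<not> p dvd x"
  using not_dvd_1 cong_dvd_iff by blast

lemma det_nonzero_vec:
  assumes det: "[a * d - b * c = 1] (mod p)" and st: "nonzero_vec p s t"
  shows "nonzero_vec p (a * s + b * t) (c * s + d * t)"
  unfolding nonzero_vec_def
proof
  assume "p dvd a * s + b * t \<and> p dvd c * s + d * t"
  then have "p dvd d * (a * s + b * t) - b * (c * s + d * t)"
    and "p dvd a * (c * s + d * t) - c * (a * s + b * t)"
    by (simp_all add: dvd_diff)
  then have "p dvd (a * d - b * c) * s" "p dvd (a * d - b * c) * t"
    by (simp_all add: algebra_simps)
  then show False
    using st cong_1_not_dvd[OF det] prime by (auto simp: nonzero_vec_def prime_dvd_mult_iff)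
qed

lemma mobius_proj_pt:
  assumes det: "[a * d - b * c = 1] (mod p)" and st: "nonzero_vec p s t"
  shows "mobius p a b c d (proj_pt p s t) = proj_pt p (a * s + b * t) (c * s + d * t)"
proof -
  obtain s' t' where st': "hom_coords p (proj_pt p s t) = (s', t')" by fastforce
  obtain m where m: "\<not> p dvd m" "[s = m * s'] (mod p)" "[t = m * t'] (mod p)"
    using hom_coords_proj_pt[OF st st'] .
  have "[a * s + b * t = m * (a * s' + b * t')] (mod p)"
    "[c * s + d * t = m * (c * s' + d * t')] (mod p)"
    using m by (simp_all add: algebra_simps cong_add cong_scalar_left)
  with m(1) have "proj_pt p (a * s + b * t) (c * s + d * t) = proj_pt p (a * s' + b * t') (c * s' + d * t')"
    by (rule proj_pt_eqI)
  then show ?thesis using mobius_hom_coords[OF proj_pt_range st'] by simp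
qed

lemma mobius_outside: "z \<notin> {0..p} \<Longrightarrow> mobius p a b c d z = z"
  by (simp add: mobius_def)

lemma mobius_comp:
  assumes "[a * d - b * c = 1] (mod p)" "[a' * d' - b' * c' = 1] (mod p)"
  shows "mobius p a b c d \<circ> mobius p a' b' c' d' =
         mobius p (a * a' + b * c') (a * b' + b * d') (c * a' + d * c') (c * b' + d * d')"
proof
  fix z
  show "(mobius p a b c d \<circ> mobius p a' b' c' d') z =
         mobius p (a * a' + b * c') (a * b' + b * d') (c * a' + d * c') (c * b' + d * d') z"
  proof (cases "z \<in> {0..p}")
    case True
    obtain s t where st: "hom_coords p z = (s, t)" by fastforce
    have "nonzero_vec p (a' * s + b' * t) (c' * s + d' * t)"
      using det_nonzero_vec[OF assms(2) hom_coords_nonzero[OF st]] .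
    then show ?thesis
      using True st by (simp add: mobius_hom_coords mobius_proj_pt[OF assms(1)] algebra_simps)
  qed (simp add: mobius_outside)
qed

lemma mobius_cong:
  assumes "[a = a'] (mod p)" "[b = b'] (mod p)" "[c = c'] (mod p)" "[d = d'] (mod p)"
  shows "mobius p a b c d = mobius p a' b' c' d'"
proof
  fix z
  show "mobius p a b c d z = mobius p a' b' c' d' z"
  proof (cases "z \<in> {0..p}")
    case True
    obtain s t where st: "hom_coords p z = (s, t)" by fastforce
    have "[a * s + b * t = 1 * (a' * s + b' * t)] (mod p)" "[c * s + d * t = 1 * (c' * s + d' * t)] (mod p)"
      using assms by (simp_all add: cong_add cong_scalar_right)
    then show ?thesis
      using True st by (simp add: mobius_hom_coords proj_pt_eqI[OF not_dvd_1])
  qed (simp add: mobius_outside)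
qed

lemma mobius_id: "mobius p 1 0 0 1 = id"
proof
  fix z
  show "mobius p 1 0 0 1 z = id z"
  proof (cases "z \<in> {0..p}")
    case True
    obtain s t where st: "hom_coords p z = (s, t)" by fastforce
    show ?thesis using mobius_hom_coords[OF True st] proj_pt_hom_coords[OF True st] by simp
  qed (simp add: mobius_outside)
qed

end


section \<open>The groups H_p and G_p\<close>

lemma mobius_in_Hp: "[a * d - b * c = 1] (mod p) \<Longrightarrow> mobius p a b c d \<in> Hp p"
  unfolding Hp_def by blast

context prime_modulus
begin

lemma Hp_comp:
  assumes "g \<in> Hp p" "h \<in> Hp p"
  shows "g \<circ> h \<in> Hp p"
proof -
  obtain a b c d where g: "g = mobius p a b c d" and dg: "[a * d - b * c = 1] (mod p)"
    using assms(1) by (auto simp: Hp_def)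
  obtain a' b' c' d' where h: "h = mobius p a' b' c' d'" and dh: "[a' * d' - b' * c' = 1] (mod p)"
    using assms(2) by (auto simp: Hp_def)
  have "[(a * d - b * c) * (a' * d' - b' * c') = 1 * 1] (mod p)"
    using dg dh by (rule cong_mult)
  then have "[(a * a' + b * c') * (c * b' + d * d') - (a * b' + b * d') * (c * a' + d * c') = 1] (mod p)"
    by (simp add: algebra_simps)
  then show ?thesis
    unfolding g h mobius_comp[OF dg dh] by (rule mobius_in_Hp)
qed

lemma id_in_Hp: "id \<in> Hp p"
  using mobius_in_Hp[of 1 1 0 0 p] by (simp add: mobius_id)

lemma Hp_inverse:
  assumes "g \<in> Hp p"
  shows "Hilbert_Choice.inv g \<in> Hp p" "Hilbert_Choice.inv g \<circ> g = id" "g \<circ> Hilbert_Choice.inv g = id"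
proof -
  obtain a b c d where g: "g = mobius p a b c d" and det: "[a * d - b * c = 1] (mod p)"
    using assms by (auto simp: Hp_def)
  have det': "[d * a - (- b) * (- c) = 1] (mod p)" using det by (simp add: mult.commute)
  have "mobius p d (- b) (- c) a \<circ> g =
      mobius p (d * a + - b * c) (d * b + - b * d) (- c * a + a * c) (- c * b + a * d)"
    unfolding g by (rule mobius_comp[OF det' det])
  also have "\<dots> = mobius p 1 0 0 1"
    using det by (intro mobius_cong) (simp_all add: mult.commute)
  finally have left: "mobius p d (- b) (- c) a \<circ> g = id" by (simp add: mobius_id)
  have "g \<circ> mobius p d (- b) (- c) a =
      mobius p (a * d + b * - c) (a * - b + b * a) (c * d + d * - c) (c * - b + d * a)"
    unfolding g by (rule mobius_comp[OF det det'])
  also have "\<dots> = mobius p 1 0 0 1"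
    using det by (intro mobius_cong) (simp_all add: mult.commute)
  finally have right: "g \<circ> mobius p d (- b) (- c) a = id" by (simp add: mobius_id)
  have "Hilbert_Choice.inv g = mobius p d (- b) (- c) a"
    using inv_unique_comp[OF right left] .
  then show "Hilbert_Choice.inv g \<in> Hp p" "Hilbert_Choice.inv g \<circ> g = id" "g \<circ> Hilbert_Choice.inv g = id"
    using mobius_in_Hp[OF det'] left right by auto
qed

lemma Hp_bij: "g \<in> Hp p \<Longrightarrow> bij g"
  using Hp_inverse o_bij by blast

lemma Hp_maps_to:
  assumes "g \<in> Hp p" "z \<in> {0..p}"
  shows "g z \<in> {0..p}"
proof -
  obtain a b c d where "g = mobius p a b c d" using assms(1) by (auto simp: Hp_def)
  moreover obtain s t where "hom_coords p z = (s, t)" by fastforce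
  ultimately show ?thesis using mobius_hom_coords[OF assms(2)] proj_pt_range by simp
qed

lemma Hp_fixes: "g \<in> Hp p \<Longrightarrow> z \<notin> {0..p} \<Longrightarrow> g z = z"
  by (auto simp: Hp_def mobius_outside)

lemma Hp_bij_betw:
  assumes "g \<in> Hp p"
  shows "bij_betw g {0..p} {0..p}"
proof (rule bij_betw_byWitness[where f' = "Hilbert_Choice.inv g"])
  show "\<forall>z\<in>{0..p}. Hilbert_Choice.inv g (g z) = z" "\<forall>z\<in>{0..p}. g (Hilbert_Choice.inv g z) = z"
    using Hp_inverse[OF assms] by (metis comp_apply id_apply)+
  show "g ` {0..p} \<subseteq> {0..p}" "Hilbert_Choice.inv g ` {0..p} \<subseteq> {0..p}"
    using Hp_maps_to assms Hp_inverse(1)[OF assms] by blast+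
qed

lemma Hp_finite: "finite (Hp p)"
proof (rule finite_subset)
  let ?R = "{0..<p} \<times> {0..<p} \<times> {0..<p} \<times> {0..<p}"
  show "Hp p \<subseteq> (\<lambda>(a, b, c, d). mobius p a b c d) ` ?R"
  proof
    fix g assume "g \<in> Hp p"
    then obtain a b c d where g: "g = mobius p a b c d" by (auto simp: Hp_def)
    have "g = mobius p (a mod p) (b mod p) (c mod p) (d mod p)"
      unfolding g by (rule mobius_cong) (simp_all add: cong_def)
    moreover have "(a mod p, b mod p, c mod p, d mod p) \<in> ?R" using p_gt_1 by auto
    ultimately show "g \<in> (\<lambda>(a, b, c, d). mobius p a b c d) ` ?R"
      by (intro image_eqI[where x = "(a mod p, b mod p, c mod p, d mod p)"]) simp_all
  qed
qed simp

end

lemma Ap_mod: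
  assumes "x \<in> Ap p"
  shows "x i mod 3 = x i"
proof (cases "i \<in> {0..p}")
  case True
  then have "x i \<in> {0, 1, 2}" using assms unfolding Ap_def by blast
  then show ?thesis by auto
qed (use assms in \<open>simp add: Ap_def\<close>)

lemma Ap_lin_comb:
  assumes "x \<in> Ap p" "y \<in> Ap p"
  shows "(\<lambda>i. (m * x i + n * y i) mod 3) \<in> Ap p"
proof -
  let ?S = "\<lambda>f. \<Sum>i\<in>{0..p}. f i"
  have "?S (\<lambda>i. (m * x i + n * y i) mod 3) mod 3 = ?S (\<lambda>i. m * x i + n * y i) mod 3"
    by (rule mod_sum_eq)
  also have "\<dots> = (m * ?S x + n * ?S y) mod 3"
    by (simp add: sum.distrib sum_distrib_left)
  also have "\<dots> = (m * (?S x mod 3) + n * (?S y mod 3)) mod 3"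
    by (rule mod_add_cong) (simp_all add: mod_simps)
  finally have "?S (\<lambda>i. (m * x i + n * y i) mod 3) mod 3 = 0"
    using assms by (simp add: Ap_def)
  moreover have "(v::int) mod 3 \<in> {0, 1, 2}" for v
    using pos_mod_bound[of 3 v] pos_mod_sign[of 3 v] by force
  moreover have "x i = 0" "y i = 0" if "i \<notin> {0..p}" for i
    using assms that by (simp_all add: Ap_def)
  ultimately show ?thesis
    unfolding Ap_def by simp
qed

lemma Ap_add: "x \<in> Ap p \<Longrightarrow> y \<in> Ap p \<Longrightarrow> (\<lambda>i. (x i + y i) mod 3) \<in> Ap p"
  using Ap_lin_comb[of x p y 1 1] by simp

lemma zero_in_Ap: "(\<lambda>_. 0) \<in> Ap p"
  unfolding Ap_def by auto

lemma pact_zero: "pact g (\<lambda>_. 0) = (\<lambda>_. 0)"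
  by (simp add: pact_def)

lemma pact_id: "pact id y = y"
  by (simp add: pact_def inv_id)

lemma pact_comp: "bij g \<Longrightarrow> bij h \<Longrightarrow> pact (g \<circ> h) y = pact g (pact h y)"
  by (simp add: pact_def o_inv_distrib)

lemma Gp_mult: "(x, g) \<otimes>\<^bsub>Gp p\<^esub> (y, h) = ((\<lambda>i. (x i + pact g y i) mod 3), g \<circ> h)"
  by (simp add: Gp_def)

lemma Gp_one: "\<one>\<^bsub>Gp p\<^esub> = ((\<lambda>_. 0), id)"
  by (simp add: Gp_def)

lemma snd_Gp_mult: "snd (u \<otimes>\<^bsub>Gp p\<^esub> v) = snd u \<circ> snd v"
  by (cases u; cases v) (simp add: Gp_mult)

lemma Gp_carrier: "carrier (Gp p) = Ap p \<times> Hp p"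
  by (auto simp: Gp_def)

context prime_modulus
begin

lemma pact_in_Ap:
  assumes "g \<in> Hp p" "y \<in> Ap p"
  shows "pact g y \<in> Ap p"
proof -
  have g': "Hilbert_Choice.inv g \<in> Hp p" using Hp_inverse(1)[OF assms(1)] .
  have "(\<Sum>i\<in>{0..p}. pact g y i) = (\<Sum>i\<in>{0..p}. y i)"
    unfolding pact_def using sum.reindex_bij_betw[OF Hp_bij_betw[OF g']] .
  then show ?thesis
    using assms(2) Hp_maps_to[OF g'] Hp_fixes[OF g'] unfolding Ap_def pact_def by auto
qed

lemma Gp_group: "group (Gp p)"
proof (rule groupI)
  fix u v assume "u \<in> carrier (Gp p)" "v \<in> carrier (Gp p)"
  then show "u \<otimes>\<^bsub>Gp p\<^esub> v \<in> carrier (Gp p)"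
    by (auto simp: Gp_carrier Gp_mult Ap_add pact_in_Ap Hp_comp)
next
  show "\<one>\<^bsub>Gp p\<^esub> \<in> carrier (Gp p)"
    by (simp add: Gp_one Gp_carrier zero_in_Ap id_in_Hp)
next
  fix u v w assume "u \<in> carrier (Gp p)" "v \<in> carrier (Gp p)" "w \<in> carrier (Gp p)"
  then show "u \<otimes>\<^bsub>Gp p\<^esub> v \<otimes>\<^bsub>Gp p\<^esub> w = u \<otimes>\<^bsub>Gp p\<^esub> (v \<otimes>\<^bsub>Gp p\<^esub> w)"
    by (auto simp: Gp_carrier Gp_mult pact_comp Hp_bij comp_assoc mod_simps add.assoc)
      (simp add: pact_def mod_simps)
next
  fix u assume "u \<in> carrier (Gp p)"
  then show "\<one>\<^bsub>Gp p\<^esub> \<otimes>\<^bsub>Gp p\<^esub> u = u"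
    by (auto simp: Gp_carrier Gp_one Gp_mult pact_id Ap_mod)
next
  fix u assume "u \<in> carrier (Gp p)"
  then obtain x g where u: "u = (x, g)" "x \<in> Ap p" "g \<in> Hp p" by (auto simp: Gp_carrier)
  let ?g' = "Hilbert_Choice.inv g"
  have "((\<lambda>i. (- pact ?g' x i) mod 3), ?g') \<in> carrier (Gp p)"
    using Ap_lin_comb[OF pact_in_Ap[OF Hp_inverse(1)[OF u(3)] u(2)] zero_in_Ap, of "-1" 0]
    by (simp add: Gp_carrier Hp_inverse(1)[OF u(3)])
  moreover have "((\<lambda>i. (- pact ?g' x i) mod 3), ?g') \<otimes>\<^bsub>Gp p\<^esub> u = \<one>\<^bsub>Gp p\<^esub>"
    by (simp add: u Gp_mult Gp_one Hp_inverse(2)[OF u(3)] mod_simps)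
  ultimately show "\<exists>y\<in>carrier (Gp p). y \<otimes>\<^bsub>Gp p\<^esub> u = \<one>\<^bsub>Gp p\<^esub>" by blast
qed

end

section \<open>The homomorphisms \<rho>_p\<close>

text \<open>The vector e_\<infinity> - e_t, with coordinates taken in {0, 1, 2}.\<close>
definition diff_vec :: "int \<Rightarrow> int \<Rightarrow> int \<Rightarrow> int" where
  "diff_vec p t = (\<lambda>i. if i = p then 1 else if i = t then 2 else 0)"

lemma diff_vec_in_Ap:
  assumes "0 \<le> t" "t < p"
  shows "diff_vec p t \<in> Ap p"
proof -
  have "(\<Sum>i\<in>{0..p}. diff_vec p t i) = (\<Sum>i\<in>{t, p}. diff_vec p t i)"
    by (rule sum.mono_neutral_right) (use assms in \<open>auto simp: diff_vec_def\<close>)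
  then show ?thesis
    using assms by (auto simp: Ap_def diff_vec_def)
qed

type_synonym mat = "int \<times> int \<times> int \<times> int"

fun mat_mult :: "mat \<Rightarrow> mat \<Rightarrow> mat" where
  "mat_mult (a, b, c, d) (a', b', c', d') =
     (a * a' + b * c', a * b' + b * d', c * a' + d * c', c * b' + d * d')"

fun mat_det :: "mat \<Rightarrow> int" where
  "mat_det (a, b, c, d) = a * d - b * c"

definition mobius_mat :: "int \<Rightarrow> mat \<Rightarrow> int \<Rightarrow> int" where
  "mobius_mat p M = (let (a, b, c, d) = M in mobius p a b c d)"

text \<open>b_1 acts as z \<mapsto> z + 4k and b_j, for j \<ge> 2, as the conjugate of the lower shear
  z \<mapsto> z / (2z + 1) by the translation z \<mapsto> z + 2(j - 1).\<close>
definition letter_mat :: "nat \<Rightarrow> nat \<times> bool \<Rightarrow> mat" where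
  "letter_mat k l = (let (j, s) = l in
     (if j = 1 then (1, if s then 4 * int k else - 4 * int k, 0, 1)
      else let c = int j - 1 in
        if s then (1 + 4 * c, - 8 * c\<^sup>2, 2, 1 - 4 * c) else (1 - 4 * c, 8 * c\<^sup>2, - 2, 1 + 4 * c)))"

definition word_mat :: "nat \<Rightarrow> (nat \<times> bool) list \<Rightarrow> mat" where
  "word_mat k w = foldr (\<lambda>l. mat_mult (letter_mat k l)) w (1, 0, 0, 1)"

definition gens :: "nat \<Rightarrow> int \<Rightarrow> nat \<Rightarrow> gelem" where
  "gens k p j = (if j = 3 then diff_vec p 0 else (\<lambda>_. 0), mobius_mat p (letter_mat k (j, True)))"

lemma mat_det_mult: "mat_det (mat_mult A B) = mat_det A * mat_det B"
  by (cases A; cases B) (simp add: algebra_simps)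

lemma mat_det_letter: "mat_det (letter_mat k l) = 1"
  by (cases l) (simp add: letter_mat_def Let_def power2_eq_square algebra_simps)

lemma mat_det_word: "mat_det (word_mat k w) = 1"
  by (induction w) (simp_all add: word_mat_def mat_det_mult mat_det_letter)

lemma letter_mat_inverse:
  "mat_mult (letter_mat k (j, s)) (letter_mat k (j, \<not> s)) = (1, 0, 0, 1)"
  by (simp add: letter_mat_def Let_def power2_eq_square algebra_simps)

lemma mobius_mat_in_Hp: "mat_det A = 1 \<Longrightarrow> mobius_mat p A \<in> Hp p"
  by (cases A) (simp add: mobius_mat_def mobius_in_Hp)

context prime_modulus
begin

lemma mobius_mat_mult:
  assumes "mat_det A = 1" "mat_det B = 1"
  shows "mobius_mat p (mat_mult A B) = mobius_mat p A \<circ> mobius_mat p B"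
  using assms by (cases A; cases B) (simp add: mobius_mat_def mobius_comp)

lemma mobius_mat_id: "mobius_mat p (1, 0, 0, 1) = id"
  by (simp add: mobius_mat_def mobius_id)

lemma inv_mobius_letter:
  "Hilbert_Choice.inv (mobius_mat p (letter_mat k (j, True))) = mobius_mat p (letter_mat k (j, False))"
proof (rule inv_unique_comp)
  show "mobius_mat p (letter_mat k (j, True)) \<circ> mobius_mat p (letter_mat k (j, False)) = id"
    using mobius_mat_mult[OF mat_det_letter mat_det_letter, of k "(j, True)" k "(j, False)"]
    by (simp add: letter_mat_inverse[of k j True, simplified] mobius_mat_id)
  show "mobius_mat p (letter_mat k (j, False)) \<circ> mobius_mat p (letter_mat k (j, True)) = id"
    using mobius_mat_mult[OF mat_det_letter mat_det_letter, of k "(j, False)" k "(j, True)"]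
    by (simp add: letter_mat_inverse[of k j False, simplified] mobius_mat_id)
qed

lemma gens_in_carrier: "gens k p j \<in> carrier (Gp p)"
  using diff_vec_in_Ap[of 0 p] p_gt_1 zero_in_Ap mobius_mat_in_Hp[OF mat_det_letter]
  by (simp add: gens_def Gp_carrier)

lemma snd_inv_Gp:
  assumes "u \<in> carrier (Gp p)"
  shows "snd (inv\<^bsub>Gp p\<^esub> u) = Hilbert_Choice.inv (snd u)"
proof -
  interpret group "Gp p" by (rule Gp_group)
  obtain x g y h where u: "u = (x, g)" and u': "inv\<^bsub>Gp p\<^esub> u = (y, h)" by fastforce
  have "(y, h) \<otimes>\<^bsub>Gp p\<^esub> (x, g) = \<one>\<^bsub>Gp p\<^esub>" "(x, g) \<otimes>\<^bsub>Gp p\<^esub> (y, h) = \<one>\<^bsub>Gp p\<^esub>"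
    using assms by (simp_all flip: u u')
  then have "g \<circ> h = id" "h \<circ> g = id" by (simp_all add: Gp_mult Gp_one)
  then have "Hilbert_Choice.inv g = h" by (rule inv_unique_comp)
  then show ?thesis using u u' by simp
qed

lemma word_eval_gens:
  "word_eval (Gp p) (gens k p) w \<in> carrier (Gp p) \<and>
   snd (word_eval (Gp p) (gens k p) w) = mobius_mat p (word_mat k w)"
proof (induction w)
  case Nil
  show ?case
    using monoid.one_closed[OF group.is_monoid[OF Gp_group]]
    by (simp add: word_eval_def word_mat_def Gp_one mobius_mat_id)
next
  case (Cons l w)
  interpret group "Gp p" by (rule Gp_group)
  obtain j s where l: "l = (j, s)" by fastforce
  let ?g = "if s then gens k p j else inv\<^bsub>Gp p\<^esub> gens k p j"
  have g: "?g \<in> carrier (Gp p)" "snd ?g = mobius_mat p (letter_mat k l)"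
    using gens_in_carrier snd_inv_Gp[OF gens_in_carrier] by (auto simp: l gens_def inv_mobius_letter)
  have "word_eval (Gp p) (gens k p) (l # w) = ?g \<otimes>\<^bsub>Gp p\<^esub> word_eval (Gp p) (gens k p) w"
    by (simp add: word_eval_def l)
  moreover have "word_mat k (l # w) = mat_mult (letter_mat k l) (word_mat k w)"
    by (simp add: word_mat_def)
  ultimately show ?case
    using Cons g by (simp add: snd_Gp_mult mobius_mat_mult mat_det_letter mat_det_word)
qed

end

section \<open>Ping-pong on the real line\<close>

definition letter_region :: "nat \<Rightarrow> nat \<times> bool \<Rightarrow> real set" where
  "letter_region k l = (let (j, s) = l in
     if j = 1 then (if s then {2 * real k<..} else {..<- 2 * real k})
     else let c = 2 * (real j - 1) in if s then {c<..<c + 1} else {c - 1<..<c})"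

lemma letter_region_ge_2:
  "j \<noteq> 1 \<Longrightarrow> x \<in> letter_region k (j, s) \<Longrightarrow> \<bar>x - 2 * (real j - 1)\<bar> < 1"
  by (auto simp: letter_region_def Let_def split: if_splits)

lemma zero_notin_letter_region: "j \<ge> 1 \<Longrightarrow> 0 \<notin> letter_region k (j, s)"
  by (auto simp: letter_region_def Let_def)

lemma lower_shear_maps_to_unit_interval:
  fixes u :: real
  assumes "0 < u \<and> u < 1 \<or> \<bar>u\<bar> > 1"
  shows "2 * u + 1 \<noteq> 0 \<and> u / (2 * u + 1) \<in> {0<..<1}"
proof (cases "u > 0")
  case False
  then have "u < -1" using assms by linarith
  then show ?thesis by (auto simp: divide_less_eq zero_less_divide_iff)
qed (auto simp: divide_less_eq)

lemma inverse_lower_shear_maps_to_neg_unit_interval: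
  fixes u :: real
  assumes "-1 < u \<and> u < 0 \<or> \<bar>u\<bar> > 1"
  shows "1 - 2 * u \<noteq> 0 \<and> u / (1 - 2 * u) \<in> {-1<..<0}"
proof (cases "u < 0")
  case True
  then have "1 - 2 * u > 0" by linarith
  then show ?thesis using True by (auto simp: less_divide_eq divide_less_0_iff)
next
  case False
  then have "u > 1" using assms by linarith
  then show ?thesis by (auto simp: less_divide_eq divide_less_0_iff)
qed

lemma conjugate_letter_action:
  fixes x :: real
  assumes "j \<noteq> 1" "letter_mat k (j, s) = (a, b, c, d)"
  defines "u \<equiv> x - 2 * (real j - 1)"
  shows "c * x + d = (if s then 2 * u + 1 else 1 - 2 * u)"
    "a * x + b = 2 * (real j - 1) * (c * x + d) + u"
proof -
  let ?c = "int j - 1"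
  have abcd: "a = (if s then 1 + 4 * ?c else 1 - 4 * ?c)" "b = (if s then - 8 * ?c\<^sup>2 else 8 * ?c\<^sup>2)"
    "c = (if s then 2 else - 2)" "d = (if s then 1 - 4 * ?c else 1 + 4 * ?c)"
    using assms(1,2) by (auto simp: letter_mat_def)
  show "c * x + d = (if s then 2 * u + 1 else 1 - 2 * u)"
    "a * x + b = 2 * (real j - 1) * (c * x + d) + u"
    unfolding abcd u_def by (simp_all add: algebra_simps power2_eq_square)
qed

lemma letter_maps_into_region:
  fixes x :: real
  assumes "j \<in> {1..k}" "j' \<in> {1..k}" "(j', s') \<noteq> (j, \<not> s)"
    and x: "x = 0 \<or> x \<in> letter_region k (j', s')"
    and M: "letter_mat k (j, s) = (a, b, c, d)"
  shows "c * x + d \<noteq> 0 \<and> (a * x + b) / (c * x + d) \<in> letter_region k (j, s)"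
proof (cases "j = 1")
  case True
  have "x > - 2 * real k" if s
    using x assms(2,3) letter_region_ge_2[of j' x k s'] True that
    by (cases "j' = 1") (auto simp: letter_region_def)
  moreover have "x < 2 * real k" if "\<not> s"
    using x assms(2,3) letter_region_ge_2[of j' x k s'] True that
    by (cases "j' = 1") (auto simp: letter_region_def)
  ultimately show ?thesis
    using M True by (auto simp: letter_mat_def letter_region_def)
next
  case False
  define u where "u = x - 2 * (real j - 1)"
  have "(if s then 0 < u \<and> u < 1 else -1 < u \<and> u < 0) \<or> \<bar>u\<bar> > 1"
  proof (cases "x = 0 \<or> j' = 1")
    case True
    have "real j \<le> real k" "real j \<ge> 2" using assms(1) False by auto
    with True show ?thesis
      using x unfolding u_def by (auto simp: letter_region_def split: if_splits)
  next
    case j': False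
    show ?thesis
    proof (cases "j' = j")
      case True
      then show ?thesis using x j' assms(3) False
        by (auto simp: u_def letter_region_def)
    next
      case False
      then have "\<bar>real j' - real j\<bar> \<ge> 1" by linarith
      then show ?thesis
        using x j' letter_region_ge_2[of j' x k s'] unfolding u_def by auto
    qed
  qed
  then have "c * x + d \<noteq> 0 \<and> u / (c * x + d) \<in> (if s then {0<..<1} else {-1<..<0})"
    using lower_shear_maps_to_unit_interval[of u] inverse_lower_shear_maps_to_neg_unit_interval[of u] conjugate_letter_action(1)[OF False M, of x]
    unfolding u_def by (cases s) auto
  moreover have "(a * x + b) / (c * x + d) = 2 * (real j - 1) + u / (c * x + d)" if "c * x + d \<noteq> 0"
    using conjugate_letter_action(2)[OF False M, of x] that by (simp add: u_def field_simps)
  ultimately show ?thesis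
    using False by (auto simp: letter_region_def Let_def)
qed

lemma reduced_word_ConsD:
  assumes "reduced_word (l # w)"
  shows "reduced_word w" "w \<noteq> [] \<Longrightarrow> hd w \<noteq> (fst l, \<not> snd l)"
proof -
  show "reduced_word w"
    using assms unfolding reduced_word_def by (metis Suc_less_eq length_Cons nth_Cons_Suc)
  show "hd w \<noteq> (fst l, \<not> snd l)" if "w \<noteq> []"
    using assms that spec[OF assms[unfolded reduced_word_def], of 0]
    by (cases w) auto
qed

text \<open>b / d is the image of 0 under the real Moebius transformation of w.\<close>
lemma word_mat_pingpong:
  assumes "w \<in> lists ({1..k} \<times> UNIV)" "reduced_word w" "w \<noteq> []" "word_mat k w = (a, b, c, d)"
  shows "d \<noteq> 0 \<and> b / d \<in> letter_region k (hd w)"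
  using assms
proof (induction w arbitrary: a b c d rule: list.induct)
  case (Cons l w)
  obtain j s where l: "l = (j, s)" by fastforce
  obtain a0 b0 c0 d0 where W: "word_mat k w = (a0, b0, c0, d0)" by (cases "word_mat k w") auto
  obtain m1 m2 m3 m4 where L: "letter_mat k (j, s) = (m1, m2, m3, m4)" by (cases "letter_mat k (j, s)") auto
  have j: "j \<in> {1..k}" using Cons.prems(1) l by auto
  have "d0 \<noteq> 0 \<and> (b0 / d0 = 0 \<or>
      (\<exists>j' s'. j' \<in> {1..k} \<and> (j', s') \<noteq> (j, \<not> s) \<and> b0 / d0 \<in> letter_region k (j', s')))"
  proof (cases "w = []")
    case True
    then show ?thesis using W by (simp add: word_mat_def)
  next
    case False
    obtain j' s' where hd: "hd w = (j', s')" by fastforce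
    have "j' \<in> {1..k}" using Cons.prems(1) False hd by (cases w) auto
    moreover have "(j', s') \<noteq> (j, \<not> s)"
      using reduced_word_ConsD(2)[OF Cons.prems(2) False] hd l by simp
    moreover have "d0 \<noteq> 0 \<and> b0 / d0 \<in> letter_region k (j', s')"
      using Cons.IH[OF _ reduced_word_ConsD(1)[OF Cons.prems(2)] False W] Cons.prems(1) hd by simp
    ultimately show ?thesis by blast
  qed
  then obtain j' s' where d0: "d0 \<noteq> 0" and "j' \<in> {1..k}" "(j', s') \<noteq> (j, \<not> s)"
    and "b0 / d0 = 0 \<or> b0 / d0 \<in> letter_region k (j', s')"
    using j by blast
  from letter_maps_into_region[OF j this(2-4) L]
  have step: "m3 * (b0 / d0) + m4 \<noteq> 0 \<and>
      (m1 * (b0 / d0) + m2) / (m3 * (b0 / d0) + m4) \<in> letter_region k (j, s)" .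
  have "b = m1 * b0 + m2 * d0" "d = m3 * b0 + m4 * d0"
    using Cons.prems(4) W L l by (auto simp: word_mat_def)
  then have "real_of_int d = d0 * (m3 * (b0 / d0) + m4)" "real_of_int b = d0 * (m1 * (b0 / d0) + m2)"
    using d0 by (simp_all add: field_simps)
  then have "d \<noteq> 0" "b / d = (m1 * (b0 / d0) + m2) / (m3 * (b0 / d0) + m4)"
    using step d0 by (auto simp del: times_divide_eq_right)
  then show ?case
    using step l by simp
qed auto

lemma word_mat_upper_right_nonzero:
  assumes "w \<in> free_elems k" "w \<noteq> []" "word_mat k w = (a, b, c, d)"
  shows "b \<noteq> 0"
proof -
  have w: "w \<in> lists ({1..k} \<times> UNIV)" "reduced_word w" using assms(1) by (auto simp: free_elems_def)
  have "fst (hd w) \<ge> 1" using w(1) assms(2) by (cases w) auto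
  then have "0 \<notin> letter_region k (hd w)"
    using zero_notin_letter_region by (metis prod.collapse)
  then show ?thesis using word_mat_pingpong[OF w assms(2,3)] by auto
qed

lemma (in prime_modulus) mobius_0_ne_0:
  assumes "\<not> p dvd b"
  shows "mobius p a b c d 0 \<noteq> 0"
proof -
  have "hom_coords p 0 = (0, 1)" using p_gt_1 by (simp add: hom_coords_def)
  then have "mobius p a b c d 0 = proj_pt p b d"
    using mobius_hom_coords[of 0] p_gt_1 by simp
  moreover have "fdiv p b d \<noteq> 0" if "\<not> p dvd d"
  proof
    assume "fdiv p b d = 0"
    with fdiv_correct[OF that, of b] have "[0 = b] (mod p)" by simp
    with assms show False by (metis cong_0_iff cong_sym)
  qed
  ultimately show ?thesis using p_gt_1 by (auto simp: proj_pt_def)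
qed

lemma word_eval_gens_ne_one:
  assumes "w \<in> free_elems k" "w \<noteq> []"
  shows "\<exists>P0. \<forall>p. Factorial_Ring.prime p \<and> p \<ge> P0 \<longrightarrow> word_eval (Gp p) (gens k p) w \<noteq> \<one>\<^bsub>Gp p\<^esub>"
proof -
  obtain a b c d where W: "word_mat k w = (a, b, c, d)" by (cases "word_mat k w") auto
  have b: "b \<noteq> 0" using word_mat_upper_right_nonzero[OF assms W] .
  have "word_eval (Gp p) (gens k p) w \<noteq> \<one>\<^bsub>Gp p\<^esub>" if "Factorial_Ring.prime p" "p \<ge> \<bar>b\<bar> + 1" for p
  proof -
    interpret prime_modulus p using that(1) by unfold_locales
    have "\<not> p dvd b"
    proof
      assume "p dvd b"
      then have "\<bar>p\<bar> \<le> \<bar>b\<bar>" using b by (rule dvd_imp_le_int[rotated])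
      with that(2) show False by linarith
    qed
    then have "snd (word_eval (Gp p) (gens k p) w) 0 \<noteq> 0"
      using word_eval_gens W mobius_0_ne_0 by (simp add: mobius_mat_def)
    then show ?thesis by (auto simp: Gp_one)
  qed
  then show ?thesis by blast
qed

section \<open>Surjectivity of \<rho>_p\<close>

context prime_modulus
begin

lemma exists_nat_multiple_cong:
  assumes "\<not> p dvd u"
  obtains n :: nat where "[int n * u = t] (mod p)"
proof -
  obtain i where i: "[u * i = 1] (mod p)" using exists_inverse assms by blast
  define n where "n = nat ((i * t) mod p)"
  have "int n = (i * t) mod p" using p_gt_1 by (simp add: n_def)
  then have "[int n * u = (i * t) * u] (mod p)"
    by (simp add: cong_def mod_mult_left_eq)
  also have "(i * t) * u = (u * i) * t" by simp
  also have "[(u * i) * t = 1 * t] (mod p)" using i by (rule cong_scalar_right)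
  finally show ?thesis using that[of n] by simp
qed

lemma one_parameter_closure:
  assumes comp: "\<And>g h. g \<in> S \<Longrightarrow> h \<in> S \<Longrightarrow> g \<circ> h \<in> S" and "id \<in> S"
    and add: "\<And>m n. \<phi> m \<circ> \<phi> n = \<phi> (m + n)" and "\<phi> 0 = id"
    and cong: "\<And>m n. [m = n] (mod p) \<Longrightarrow> \<phi> m = \<phi> n"
    and "\<phi> u \<in> S" "\<not> p dvd u"
  shows "\<phi> t \<in> S"
proof -
  have "\<phi> (int n * u) \<in> S" for n
  proof (induction n)
    case 0
    show ?case using \<open>\<phi> 0 = id\<close> \<open>id \<in> S\<close> by (metis mult_zero_left of_nat_0)
  next
    case (Suc n)
    have "\<phi> u \<circ> \<phi> (int n * u) \<in> S" using comp \<open>\<phi> u \<in> S\<close> Suc by blast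
    then show ?case by (simp add: add algebra_simps)
  qed
  moreover obtain n :: nat where "[int n * u = t] (mod p)"
    using exists_nat_multiple_cong \<open>\<not> p dvd u\<close> by blast
  ultimately show ?thesis using cong by metis
qed

lemma upper_shear_comp: "mobius p 1 m 0 1 \<circ> mobius p 1 n 0 1 = mobius p 1 (m + n) 0 1"
  using mobius_comp[of 1 1 m 0 1 1 n 0] by (simp add: add.commute)

lemma lower_shear_comp: "mobius p 1 0 m 1 \<circ> mobius p 1 0 n 1 = mobius p 1 0 (m + n) 1"
  using mobius_comp[of 1 1 0 m 1 1 0 n] by (simp add: add.commute)

lemma mobius_shear_decomposition:
  assumes det: "[a * d - b * c = 1] (mod p)" and c: "\<not> p dvd c"
  obtains s r where "mobius p a b c d = mobius p 1 s 0 1 \<circ> mobius p 1 0 c 1 \<circ> mobius p 1 r 0 1"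
proof -
  obtain i where "[c * i = 1] (mod p)" using exists_inverse c by blast
  then have e: "p dvd c * i - 1" and f: "p dvd a * d - b * c - 1"
    using det by (simp_all add: cong_iff_dvd_diff)
  define s where "s = (a - 1) * i"
  define r where "r = (d - 1) * i"
  have "mobius p 1 0 c 1 \<circ> mobius p 1 r 0 1 = mobius p 1 r c (c * r + 1)"
    using mobius_comp[of 1 1 0 c 1 1 r 0] by simp
  moreover have "mobius p 1 s 0 1 \<circ> mobius p 1 r c (c * r + 1) =
      mobius p (1 + s * c) (r + s * (c * r + 1)) c (c * r + 1)"
    using mobius_comp[of 1 1 s 0 1 "c * r + 1" r c] by (simp add: algebra_simps)
  moreover have "\<dots> = mobius p a b c d"
  proof (rule mobius_cong)
    have "1 + s * c - a = (a - 1) * (c * i - 1)" "c * r + 1 - d = (d - 1) * (c * i - 1)"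
      "r + s * (c * r + 1) - b =
         b * (c * i - 1) + i * (a * d - b * c - 1) + (a - 1) * i * (c * i - 1) * (d - 1)"
      unfolding r_def s_def by (simp_all add: algebra_simps)
    then show "[1 + s * c = a] (mod p)" "[c * r + 1 = d] (mod p)" "[r + s * (c * r + 1) = b] (mod p)"
      using e f by (simp_all add: cong_iff_dvd_diff)
  qed simp
  ultimately show ?thesis using that[of s r] by (simp add: comp_assoc)
qed

lemma Hp_generated_by_shears:
  assumes comp: "\<And>g h. g \<in> S \<Longrightarrow> h \<in> S \<Longrightarrow> g \<circ> h \<in> S"
    and upper: "\<And>t. mobius p 1 t 0 1 \<in> S" and lower: "\<And>t. mobius p 1 0 t 1 \<in> S"
  shows "Hp p \<subseteq> S"
proof
  have generic: "mobius p a b c d \<in> S" if "[a * d - b * c = 1] (mod p)" "\<not> p dvd c" for a b c d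
    using mobius_shear_decomposition[OF that] comp upper lower by metis
  fix g assume "g \<in> Hp p"
  then obtain a b c d where g: "g = mobius p a b c d" and det: "[a * d - b * c = 1] (mod p)"
    by (auto simp: Hp_def)
  show "g \<in> S"
  proof (cases "p dvd c")
    case False
    then show ?thesis using generic det g by blast
  next
    case True
    have det': "[a * (b + d) - b * (a + c) = 1] (mod p)"
      using det by (simp add: algebra_simps)
    have "\<not> p dvd a"
      using True cong_1_not_dvd[OF det] by (metis dvd_diff dvd_mult dvd_mult2)
    with True have "\<not> p dvd a + c" by (metis dvd_add_left_iff)
    then have "mobius p 1 0 (- 1) 1 \<circ> mobius p a b (a + c) (b + d) \<in> S"
      using comp lower generic[OF det'] by blast
    moreover have "mobius p 1 0 (- 1) 1 \<circ> mobius p a b (a + c) (b + d) = g"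
      using mobius_comp[OF _ det', of 1 1 0 "- 1"] by (simp add: g)
    ultimately show ?thesis by simp
  qed
qed

end

lemma Ap_subset_additive_closure:
  assumes p: "p \<ge> 0"
    and add: "\<And>x y. x \<in> V \<Longrightarrow> y \<in> V \<Longrightarrow> (\<lambda>i. (x i + y i) mod 3) \<in> V"
    and zero: "(\<lambda>_. 0) \<in> V"
    and diff: "\<And>t. 0 \<le> t \<Longrightarrow> t < p \<Longrightarrow> diff_vec p t \<in> V"
  shows "Ap p \<subseteq> V"
proof -
  have multiple: "(\<lambda>i. (int m * diff_vec p t i) mod 3) \<in> V" if "0 \<le> t" "t < p" for m t
  proof (induction m)
    case (Suc m)
    from add[OF Suc diff[OF that]]
    show ?case by (simp add: mod_simps algebra_simps)
  qed (use zero in simp)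
  text \<open>Clear the coordinates below p one at a time, from the top; the coordinate at p
    then vanishes because the coordinate sum does.\<close>
  have main: "x \<in> V" if "x \<in> Ap p" "\<forall>i. int n \<le> i \<and> i < p \<longrightarrow> x i = 0" "int n \<le> p" for n x
    using that
  proof (induction n arbitrary: x)
    case 0
    then have x: "x i = 0" if "i \<noteq> p" for i
      using that by (cases "i \<in> {0..p}") (auto simp: Ap_def)
    then have "(\<Sum>i\<in>{0..p}. x i) = x p"
      using p by (subst sum.mono_neutral_right[of "{0..p}" "{p}"]) auto
    then have "x p = 0" using 0 Ap_mod[OF 0(1), of p] by (simp add: Ap_def)
    with x have "x = (\<lambda>_. 0)" by (metis ext)
    then show ?case using zero by simp
  next
    case (Suc n)
    define t where "t = int n"
    have t: "0 \<le> t" "t < p" using Suc.prems(3) by (auto simp: t_def)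
    define x' where "x' = (\<lambda>i. (1 * x i + x t * diff_vec p t i) mod 3)"
    have "x' \<in> Ap p"
      unfolding x'_def using Ap_lin_comb[OF Suc.prems(1) diff_vec_in_Ap[OF t]] .
    moreover have "\<forall>i. int n \<le> i \<and> i < p \<longrightarrow> x' i = 0"
      using Suc.prems(2) by (auto simp: x'_def diff_vec_def t_def)
    ultimately have "x' \<in> V" using Suc.IH Suc.prems(3) by simp
    from add[OF this multiple[OF t, of "nat (2 * x t)"]]
    have "(\<lambda>i. (x' i + (2 * x t * diff_vec p t i) mod 3) mod 3) \<in> V"
      using Ap_mod[OF Suc.prems(1), of t] pos_mod_sign[of 3 "x t"] by simp
    also have "(\<lambda>i. (x' i + (2 * x t * diff_vec p t i) mod 3) mod 3) = (\<lambda>i. (x i + 3 * (x t * diff_vec p t i)) mod 3)"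
      by (simp add: x'_def mod_simps algebra_simps)
    also have "\<dots> = x"
      using Ap_mod[OF Suc.prems(1)] by simp
    finally show ?case .
  qed
  show ?thesis
    using main[where n = "nat p"] p by auto
qed

context prime_modulus
begin

lemma upper_shear_apply:
  assumes "0 \<le> t" "t < p"
  shows "mobius p 1 t 0 1 0 = t" "mobius p 1 t 0 1 p = p"
  using assms p_gt_1 not_dvd_1 fdiv_1 by (auto simp: mobius_def cong_0_iff)

lemma pact_diff_vec:
  assumes "g \<in> Hp p" "g p = p" "g 0 = t"
  shows "pact g (diff_vec p 0) = diff_vec p t"
proof
  fix i
  have "Hilbert_Choice.inv g i = v \<longleftrightarrow> i = g v" for v
    using Hp_bij[OF assms(1)] by (metis bij_inv_eq_iff)
  then show "pact g (diff_vec p 0) i = diff_vec p t i"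
    using assms(2,3) by (auto simp: pact_def diff_vec_def)
qed

end

locale pingpong_setup = prime_modulus +
  fixes k :: nat
  assumes k_ge_3: "k \<ge> 3" and p_gt: "4 * int k < p"
begin

abbreviation gens_span :: "gelem set" where
  "gens_span \<equiv> generate (Gp p) (gens k p ` {1..k})"

lemma gens_span_mult: "u \<in> gens_span \<Longrightarrow> v \<in> gens_span \<Longrightarrow> u \<otimes>\<^bsub>Gp p\<^esub> v \<in> gens_span"
  by (rule generate.eng)

lemma gens_in_span: "j \<in> {1..k} \<Longrightarrow> gens k p j \<in> gens_span"
  by (simp add: generate.incl)

lemma Hp_in_span:
  assumes "g \<in> Hp p"
  shows "((\<lambda>_. 0), g) \<in> gens_span"
proof -
  let ?S = "{g. ((\<lambda>_. 0), g) \<in> gens_span}"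
  have comp: "g \<circ> h \<in> ?S" if "g \<in> ?S" "h \<in> ?S" for g h
    using gens_span_mult[of "((\<lambda>_. 0), g)" "((\<lambda>_. 0), h)"] that by (simp add: Gp_mult pact_zero)
  have id: "id \<in> ?S" using generate.one[of "Gp p"] by (simp add: Gp_one)
  have "mobius p 1 (4 * int k) 0 1 \<in> ?S"
    using gens_in_span[of 1] k_ge_3 by (simp add: gens_def letter_mat_def mobius_mat_def)
  moreover have "\<not> p dvd 4 * int k"
    using p_gt k_ge_3 by (auto dest: zdvd_imp_le)
  ultimately have upper: "mobius p 1 t 0 1 \<in> ?S" for t
    using one_parameter_closure[of ?S "\<lambda>t. mobius p 1 t 0 1"] comp id
    by (simp add: upper_shear_comp mobius_id mobius_cong)
  have "mobius p 5 (- 8) 2 (- 3) \<in> ?S"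
    using gens_in_span[of 2] k_ge_3 by (simp add: gens_def letter_mat_def mobius_mat_def)
  then have "mobius p 1 (- 2) 0 1 \<circ> mobius p 5 (- 8) 2 (- 3) \<circ> mobius p 1 2 0 1 \<in> ?S"
    using comp upper by blast
  moreover have "mobius p 1 (- 2) 0 1 \<circ> mobius p 5 (- 8) 2 (- 3) \<circ> mobius p 1 2 0 1 = mobius p 1 0 2 1"
    using mobius_comp[of 1 1 "- 2" 0 5 "- 3" "- 8" 2] mobius_comp[of 1 "- 3" "- 2" 2 1 1 2 0] by simp
  moreover have "\<not> p dvd 2"
    using p_gt k_ge_3 by (auto dest: zdvd_imp_le)
  ultimately have lower: "mobius p 1 0 t 1 \<in> ?S" for t
    using one_parameter_closure[of ?S "\<lambda>t. mobius p 1 0 t 1"] comp id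
    by (simp add: lower_shear_comp mobius_id mobius_cong)
  show ?thesis
    using Hp_generated_by_shears[of ?S] comp upper lower assms by blast
qed

lemma diff_vec_in_span:
  assumes "0 \<le> t" "t < p"
  shows "(diff_vec p t, id) \<in> gens_span"
proof -
  let ?M = "\<lambda>s. mobius_mat p (letter_mat k (3, s))"
  have "gens k p 3 \<otimes>\<^bsub>Gp p\<^esub> ((\<lambda>_. 0), ?M False) \<in> gens_span"
    using gens_span_mult gens_in_span[of 3] k_ge_3 Hp_in_span[OF mobius_mat_in_Hp[OF mat_det_letter]]
    by simp
  moreover have "?M True \<circ> ?M False = id"
    using inv_mobius_letter Hp_inverse(3)[OF mobius_mat_in_Hp[OF mat_det_letter]] by metis
  ultimately have dv0: "(diff_vec p 0, id) \<in> gens_span"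
    using Ap_mod[OF diff_vec_in_Ap[of 0 p]] p_gt_1 by (simp add: gens_def Gp_mult pact_zero)
  have "((\<lambda>_. 0), mobius p 1 t 0 1) \<otimes>\<^bsub>Gp p\<^esub> (diff_vec p 0, id) \<otimes>\<^bsub>Gp p\<^esub> ((\<lambda>_. 0), mobius p 1 (- t) 0 1)
      \<in> gens_span"
    by (intro gens_span_mult dv0 Hp_in_span mobius_in_Hp) simp_all
  moreover have "pact (mobius p 1 t 0 1) (diff_vec p 0) = diff_vec p t"
    using pact_diff_vec mobius_in_Hp[of 1 1 t 0 p] upper_shear_apply[OF assms] by simp
  ultimately show ?thesis
    using Ap_mod[OF diff_vec_in_Ap[OF assms]] by (simp add: Gp_mult pact_zero upper_shear_comp mobius_id)
qed

lemma gens_span_carrier: "gens_span = carrier (Gp p)"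
proof
  interpret group "Gp p" by (rule Gp_group)
  show "gens_span \<subseteq> carrier (Gp p)"
    using gens_in_carrier by (intro generate_incl) blast
  have vec: "(x, id) \<in> gens_span" if "x \<in> Ap p" for x
  proof -
    have "Ap p \<subseteq> {x. (x, id) \<in> gens_span}"
    proof (rule Ap_subset_additive_closure)
      fix x y assume "x \<in> {x. (x, id) \<in> gens_span}" "y \<in> {x. (x, id) \<in> gens_span}"
      then show "(\<lambda>i. (x i + y i) mod 3) \<in> {x. (x, id) \<in> gens_span}"
        using gens_span_mult[of "(x, id)" "(y, id)"] by (simp add: Gp_mult pact_id)
    qed (use p_gt_1 diff_vec_in_span Hp_in_span[OF id_in_Hp] in auto)
    then show ?thesis using that by blast
  qed
  show "carrier (Gp p) \<subseteq> gens_span"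
  proof
    fix u assume "u \<in> carrier (Gp p)"
    then obtain x g where u: "u = (x, g)" "x \<in> Ap p" "g \<in> Hp p" by (auto simp: Gp_carrier)
    have "(x, id) \<otimes>\<^bsub>Gp p\<^esub> ((\<lambda>_. 0), g) \<in> gens_span"
      using gens_span_mult vec Hp_in_span u by blast
    moreover have "(x, id) \<otimes>\<^bsub>Gp p\<^esub> ((\<lambda>_. 0), g) = u"
      using u Ap_mod[OF u(2)] by (simp add: Gp_mult pact_zero)
    ultimately show "u \<in> gens_span" by simp
  qed
qed

end

section \<open>An almost invariant set\<close>

lemma (in group) right_translate_symdiff_subset:
  assumes "T \<subseteq> carrier G" "s \<in> carrier G"
    and stable: "\<And>t. t \<in> carrier G \<Longrightarrow> t \<notin> B \<Longrightarrow> t \<otimes> s \<in> T \<longleftrightarrow> t \<in> T"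
  shows "((\<lambda>t. t \<otimes> s) ` T - T) \<union> (T - (\<lambda>t. t \<otimes> s) ` T) \<subseteq> (\<lambda>t. t \<otimes> s) ` B"
proof
  fix u assume u: "u \<in> ((\<lambda>t. t \<otimes> s) ` T - T) \<union> (T - (\<lambda>t. t \<otimes> s) ` T)"
  show "u \<in> (\<lambda>t. t \<otimes> s) ` B"
  proof (cases "u \<in> T")
    case False
    then obtain t where "t \<in> T" "u = t \<otimes> s" using u by blast
    then show ?thesis using stable False assms(1) by blast
  next
    case True
    define z where "z = u \<otimes> inv s"
    have z: "z \<in> carrier G" "u = z \<otimes> s"
      using True assms(1,2) by (auto simp: z_def m_assoc)
    then have "z \<notin> T" using True u by blast
    then show ?thesis using stable z True by blast
  qed
qed

lemma finite_Ap: "finite (Ap p)"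
proof (rule finite_subset)
  show "Ap p \<subseteq> {f. \<forall>i. (i \<in> {0..p} \<longrightarrow> f i \<in> {0, 1, 2}) \<and> (i \<notin> {0..p} \<longrightarrow> f i = 0)}"
    unfolding Ap_def by blast
  show "finite {f. \<forall>i. (i \<in> {0..p} \<longrightarrow> f i \<in> {0::int, 1, 2}) \<and> (i \<notin> {0..p} \<longrightarrow> f i = 0)}"
    by (rule finite_set_of_finite_funs) auto
qed

lemma card_Gp: "card (carrier (Gp p)) = card (Ap p) * card (Hp p)"
  unfolding Gp_carrier by (rule card_cartesian_product)

definition Tp :: "int \<Rightarrow> gelem set" where
  "Tp p = {u \<in> carrier (Gp p). fst u 0 = 0}"

context prime_modulus
begin

text \<open>Adding e_0 - e_\<infinity> permutes the three classes of A_p cut out by the 0-coordinate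
  cyclically, so they have the same size.\<close>
lemma card_Ap_coord0: "card (Ap p) = 3 * card {x \<in> Ap p. x 0 = 0}"
proof -
  let ?S = "\<lambda>c. {x \<in> Ap p. x 0 = c}"
  let ?f = "\<lambda>x i. (1 * x i + 2 * diff_vec p 0 i) mod 3"
  have dv: "diff_vec p 0 \<in> Ap p" using diff_vec_in_Ap[of 0 p] p_gt_1 by simp
  have step: "card (?S c) \<le> card (?S ((c + 1) mod 3))" for c
  proof (rule card_inj_on_le)
    show "inj_on ?f (?S c)"
    proof (rule inj_onI, rule ext)
      fix x y i assume "x \<in> ?S c" "y \<in> ?S c" "?f x = ?f y"
      then have "(x i + 2 * diff_vec p 0 i) mod 3 = (y i + 2 * diff_vec p 0 i) mod 3"
        "x \<in> Ap p" "y \<in> Ap p" by (auto dest: fun_cong[of _ _ i])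
      then show "x i = y i" by (metis Ap_mod cong_add_rcancel cong_def)
    qed
    show "?f ` ?S c \<subseteq> ?S ((c + 1) mod 3)"
      using Ap_lin_comb[OF _ dv, of _ 1 2] p_gt_1 mod_add_self2[of "_ + 1" 3]
      by (auto simp: diff_vec_def mod_simps add.assoc)
  qed (use finite_Ap in auto)
  have fin: "finite (?S c)" for c using finite_Ap by simp
  have "?S 0 \<union> ?S 1 \<union> ?S 2 = Ap p"
    using p_gt_1 by (auto simp: Ap_def)
  moreover have "card (?S 0 \<union> ?S 1 \<union> ?S 2) = card (?S 0 \<union> ?S 1) + card (?S 2)"
    by (rule card_Un_disjoint) (auto simp: fin)
  moreover have "card (?S 0 \<union> ?S 1) = card (?S 0) + card (?S 1)"
    by (rule card_Un_disjoint) (auto simp: fin)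
  ultimately have "card (Ap p) = card (?S 0) + card (?S 1) + card (?S 2)" by simp
  then show ?thesis using step[of 0] step[of 1] step[of 2] by simp
qed

lemma density_Tp: "real (card (Tp p)) / real (card (carrier (Gp p))) = 1 / 3"
proof -
  have "Tp p = {x \<in> Ap p. x 0 = 0} \<times> Hp p"
    by (auto simp: Tp_def Gp_carrier)
  then have "card (Tp p) = card {x \<in> Ap p. x 0 = 0} * card (Hp p)"
    by (simp add: card_cartesian_product)
  moreover have "card {x \<in> Ap p. x 0 = 0} * card (Hp p) > 0"
    using finite_Ap zero_in_Ap Hp_finite id_in_Hp card_Ap_coord0 by (auto simp: card_gt_0_iff)
  ultimately show ?thesis by (simp add: card_Gp card_Ap_coord0)
qed

end

lemma card_comp_fiber_le:
  assumes "finite H" "inj \<sigma>" "\<And>g. g \<in> H \<Longrightarrow> \<sigma> \<circ> g \<in> H" "\<sigma> b = c"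
  shows "card {g \<in> H. g a = b} \<le> card {g \<in> H. g a = c}"
proof (rule card_inj_on_le[of "(\<circ>) \<sigma>"])
  show "inj_on ((\<circ>) \<sigma>) {g \<in> H. g a = b}"
  proof (rule inj_onI, rule ext)
    fix g h x assume "\<sigma> \<circ> g = \<sigma> \<circ> h"
    then have "\<sigma> (g x) = \<sigma> (h x)" by (metis comp_apply)
    then show "g x = h x" using injD[OF assms(2)] by blast
  qed
  show "(\<circ>) \<sigma> ` {g \<in> H. g a = b} \<subseteq> {g \<in> H. g a = c}"
    using assms(3,4) by auto
  show "finite {g \<in> H. g a = c}"
    using assms(1) by simp
qed

context prime_modulus
begin

lemma Hp_transitive:
  assumes "b \<in> {0..p}"
  obtains \<sigma> where "\<sigma> \<in> Hp p" "\<sigma> 0 = b"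
proof (cases "b = p")
  case True
  have "mobius p 0 (- 1) 1 0 \<in> Hp p" by (rule mobius_in_Hp) simp
  moreover have "mobius p 0 (- 1) 1 0 0 = p" using p_gt_1 by (simp add: mobius_def)
  ultimately show ?thesis using that True by blast
next
  case False
  have "mobius p 1 b 0 1 \<in> Hp p" by (rule mobius_in_Hp) simp
  moreover have "mobius p 1 b 0 1 0 = b" using upper_shear_apply(1) assms False by simp
  ultimately show ?thesis using that by blast
qed

lemma card_Hp_fiber:
  assumes "a \<in> {0..p}"
  shows "card (Hp p) = nat (p + 1) * card {g \<in> Hp p. g a = 0}"
proof -
  have fiber: "card {g \<in> Hp p. g a = b} = card {g \<in> Hp p. g a = 0}" if b: "b \<in> {0..p}" for b
  proof -
    obtain \<sigma> where \<sigma>: "\<sigma> \<in> Hp p" "\<sigma> 0 = b" using Hp_transitive[OF b] by blast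
    have \<sigma>': "Hilbert_Choice.inv \<sigma> \<in> Hp p" "Hilbert_Choice.inv \<sigma> b = 0"
      using Hp_inverse(1)[OF \<sigma>(1)] Hp_bij[OF \<sigma>(1)] \<sigma>(2) by (auto simp: bij_is_inj)
    have "card {g \<in> Hp p. g a = 0} \<le> card {g \<in> Hp p. g a = b}"
      using \<sigma> by (intro card_comp_fiber_le Hp_finite bij_is_inj Hp_bij Hp_comp)
    moreover have "card {g \<in> Hp p. g a = b} \<le> card {g \<in> Hp p. g a = 0}"
      using \<sigma>' by (intro card_comp_fiber_le Hp_finite bij_is_inj Hp_bij Hp_comp)
    ultimately show ?thesis by simp
  qed
  have "(\<Union>b\<in>{0..p}. {g \<in> Hp p. g a = b}) = Hp p"
    using Hp_maps_to assms by blast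
  moreover have "card (\<Union>b\<in>{0..p}. {g \<in> Hp p. g a = b}) = (\<Sum>b\<in>{0..p}. card {g \<in> Hp p. g a = b})"
    using Hp_finite by (intro card_UN_disjoint) auto
  ultimately have "card (Hp p) = (\<Sum>b\<in>{0..p}. card {g \<in> Hp p. g a = b})" by simp
  also have "\<dots> = (\<Sum>b\<in>{0..p}. card {g \<in> Hp p. g a = 0})"
    by (rule sum.cong[OF refl fiber])
  also have "\<dots> = nat (p + 1) * card {g \<in> Hp p. g a = 0}"
    by simp
  finally show ?thesis .
qed

lemma card_Hp_moving_to_0_or_infinity:
  "real (card {g \<in> Hp p. g 0 = 0 \<or> g p = 0}) \<le> 2 / (p + 1) * real (card (Hp p))"
proof -
  let ?F = "\<lambda>a. {g \<in> Hp p. g a = 0}"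
  have "{g \<in> Hp p. g 0 = 0 \<or> g p = 0} = ?F 0 \<union> ?F p" by blast
  then have "card {g \<in> Hp p. g 0 = 0 \<or> g p = 0} \<le> card (?F 0) + card (?F p)"
    by (simp add: card_Un_le)
  also have "card (?F p) = card (?F 0)"
    using card_Hp_fiber[of 0] card_Hp_fiber[of p] p_gt_1 by simp
  finally have "real (card {g \<in> Hp p. g 0 = 0 \<or> g p = 0}) \<le> 2 * real (card (?F 0))" by simp
  moreover have "2 / (p + 1) * real (card (Hp p)) = 2 * real (card (?F 0))"
    using card_Hp_fiber[of 0] p_gt_1 by (simp add: field_simps)
  ultimately show ?thesis by linarith
qed

lemma Tp_right_translate_stable:
  assumes s: "s \<in> carrier (Gp p)" "\<And>i. fst s i \<noteq> 0 \<Longrightarrow> i = 0 \<or> i = p"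
    and t: "t \<in> carrier (Gp p)" "t \<notin> Ap p \<times> {g \<in> Hp p. g 0 = 0 \<or> g p = 0}"
  shows "t \<otimes>\<^bsub>Gp p\<^esub> s \<in> Tp p \<longleftrightarrow> t \<in> Tp p"
proof -
  interpret group "Gp p" by (rule Gp_group)
  obtain x g where tg: "t = (x, g)" "x \<in> Ap p" "g \<in> Hp p" using t(1) by (auto simp: Gp_carrier)
  have "g 0 \<noteq> 0" "g p \<noteq> 0" using t(2) tg by auto
  then have "Hilbert_Choice.inv g 0 \<noteq> 0" "Hilbert_Choice.inv g 0 \<noteq> p"
    using Hp_bij[OF tg(3)] by (metis bij_inv_eq_iff)+
  then have "fst s (Hilbert_Choice.inv g 0) = 0" using s(2) by blast
  then have "fst (t \<otimes>\<^bsub>Gp p\<^esub> s) 0 = fst t 0"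
    using Ap_mod[OF tg(2)] tg(1) by (cases s) (simp add: Gp_mult pact_def)
  then show ?thesis using s(1) t(1) by (simp add: Tp_def)
qed

lemma card_Tp_symdiff:
  assumes s: "s \<in> carrier (Gp p)" "\<And>i. fst s i \<noteq> 0 \<Longrightarrow> i = 0 \<or> i = p"
  shows "real (card (((\<lambda>t. t \<otimes>\<^bsub>Gp p\<^esub> s) ` Tp p - Tp p) \<union> (Tp p - (\<lambda>t. t \<otimes>\<^bsub>Gp p\<^esub> s) ` Tp p)))
    \<le> 2 / sqrt p * real (card (carrier (Gp p)))"
proof -
  interpret group "Gp p" by (rule Gp_group)
  let ?B = "Ap p \<times> {g \<in> Hp p. g 0 = 0 \<or> g p = 0}"
  have fin: "finite ?B" using finite_Ap Hp_finite by simp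
  have "card (((\<lambda>t. t \<otimes>\<^bsub>Gp p\<^esub> s) ` Tp p - Tp p) \<union> (Tp p - (\<lambda>t. t \<otimes>\<^bsub>Gp p\<^esub> s) ` Tp p))
      \<le> card ((\<lambda>t. t \<otimes>\<^bsub>Gp p\<^esub> s) ` ?B)"
    using right_translate_symdiff_subset[of "Tp p" s ?B] Tp_right_translate_stable[OF s] s(1) fin
    by (intro card_mono) (auto simp: Tp_def)
  also have "\<dots> \<le> card ?B" using fin by (rule card_image_le)
  finally have "real (card (((\<lambda>t. t \<otimes>\<^bsub>Gp p\<^esub> s) ` Tp p - Tp p) \<union> (Tp p - (\<lambda>t. t \<otimes>\<^bsub>Gp p\<^esub> s) ` Tp p)))
      \<le> real (card (Ap p)) * real (card {g \<in> Hp p. g 0 = 0 \<or> g p = 0})"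
    by (simp add: card_cartesian_product flip: of_nat_mult)
  also have "\<dots> \<le> real (card (Ap p)) * (2 / (p + 1) * real (card (Hp p)))"
    using card_Hp_moving_to_0_or_infinity by (rule mult_left_mono) simp
  also have "\<dots> = 2 / (p + 1) * real (card (carrier (Gp p)))"
    by (simp add: card_Gp)
  also have "\<dots> \<le> 2 / sqrt p * real (card (carrier (Gp p)))"
  proof (intro mult_right_mono divide_left_mono)
    have "0 \<le> real_of_int p * p" by simp
    then show "sqrt p \<le> p + 1"
      using p_gt_1 by (intro real_le_lsqrt) (simp_all add: power2_eq_square algebra_simps)
  qed (use p_gt_1 in auto)
  finally show ?thesis .
qed

end

lemma gens_support: "fst (gens k p j) i \<noteq> 0 \<Longrightarrow> i = 0 \<or> i = p"
  by (auto simp: gens_def diff_vec_def split: if_splits)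

theorem lemma3p5:
  fixes k :: nat
  assumes "k \<ge> 3"
  shows "\<exists>C::real. C > 0 \<and>
    (\<exists>(gen :: int \<Rightarrow> nat \<Rightarrow> gelem) (T :: int \<Rightarrow> gelem set).
      (\<exists>P0. \<forall>p. Factorial_Ring.prime p \<and> p mod 3 = 1 \<and> p \<ge> P0 \<longrightarrow>
          (\<forall>j\<in>{1..k}. gen p j \<in> carrier (Gp p))
        \<and> generate (Gp p) (gen p ` {1..k}) = carrier (Gp p)
        \<and> T p \<subseteq> carrier (Gp p)
        \<and> 1 / 243 \<le> real (card (T p)) / real (card (carrier (Gp p)))
        \<and> real (card (T p)) / real (card (carrier (Gp p))) \<le> 1 / 3
        \<and> (\<forall>j\<in>{1..k}.
             real (card (((\<lambda>t. t \<otimes>\<^bsub>Gp p\<^esub> gen p j) ` T p - T p) \<union>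
                         (T p - (\<lambda>t. t \<otimes>\<^bsub>Gp p\<^esub> gen p j) ` T p)))
               \<le> C / sqrt (real_of_int p) * real (card (carrier (Gp p)))))
      \<and> (\<forall>h\<in>free_elems k. h \<noteq> [] \<longrightarrow>
           (\<exists>P0. \<forall>p. Factorial_Ring.prime p \<and> p mod 3 = 1 \<and> p \<ge> P0 \<longrightarrow>
              word_eval (Gp p) (gen p) h \<noteq> \<one>\<^bsub>Gp p\<^esub>)))"
proof (intro exI[of _ "2::real"] conjI exI[of _ "gens k"] exI[of _ Tp] exI[of _ "4 * int k + 1"] allI impI)
  fix p :: int
  assume "Factorial_Ring.prime p \<and> p mod 3 = 1 \<and> 4 * int k + 1 \<le> p"
  then interpret pingpong_setup p k
    using assms by unfold_locales auto
  show "\<forall>j\<in>{1..k}. gens k p j \<in> carrier (Gp p)"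
    using gens_in_carrier by blast
  show "generate (Gp p) (gens k p ` {1..k}) = carrier (Gp p)"
    by (rule gens_span_carrier)
  show "Tp p \<subseteq> carrier (Gp p)"
    by (auto simp: Tp_def)
  show "1 / 243 \<le> real (card (Tp p)) / real (card (carrier (Gp p)))"
    "real (card (Tp p)) / real (card (carrier (Gp p))) \<le> 1 / 3"
    using density_Tp by simp_all
  show "\<forall>j\<in>{1..k}. real (card (((\<lambda>t. t \<otimes>\<^bsub>Gp p\<^esub> gens k p j) ` Tp p - Tp p) \<union>
      (Tp p - (\<lambda>t. t \<otimes>\<^bsub>Gp p\<^esub> gens k p j) ` Tp p))) \<le> 2 / sqrt p * real (card (carrier (Gp p)))"
    by (intro ballI card_Tp_symdiff gens_in_carrier gens_support)
next
  show "\<forall>h\<in>free_elems k. h \<noteq> [] \<longrightarrow> (\<exists>P0. \<forall>p. Factorial_Ring.prime p \<and> p mod 3 = 1 \<and> p \<ge> P0 \<longrightarrow>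
      word_eval (Gp p) (gens k p) h \<noteq> \<one>\<^bsub>Gp p\<^esub>)"
    using word_eval_gens_ne_one by blast
qed simp

end
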